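(* The Rudin-Shapiro sequence $\mathbf{r}$ has an unbordered factor of every length $n \geq 0$.
   Context: For a word $w \in 1\{0,1\}^*$ and integer $n \geq 0$, let $a_w(n)$ be the number of (possibly overlapping) occurrences of $w$ as a factor of the ordinary (most significant digit first) base-$2$ representation of $n$. The Rudin-Shapiro sequence is $\mathbf{r} = r(0)r(1)r(2)\cdots$ with $r(n) = (-1)^{a_{11}(n)}$, a sequence over $\{1,-1\}$. A factor of length $n$ of $\mathbf{r}$ is a word $r(i)r(i+1)\cdots r(i+n-1)$ for some $i \geq 0$. A finite word $w$ is bordered if there is a word $x$ with $0 < |x| \leq |w|/2$ such that $w$ both begins and ends with $x$; otherwise $w$ is unbordered. *)

theory Defs
  imports Main
begin

fun bin :: "nat \<Rightarrow> nat list" where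
  "bin n = (if n = 0 then [] else bin (n div 2) @ [n mod 2])"

declare bin.simps[simp del]

definition occ :: "'a list \<Rightarrow> 'a list \<Rightarrow> nat" where
  "occ w v = card {i. i + length w \<le> length v \<and> take (length w) (drop i v) = w}"

definition a_w :: "nat list \<Rightarrow> nat \<Rightarrow> nat" where
  "a_w w n = occ w (bin n)"

definition rs :: "nat \<Rightarrow> int" where
  "rs n = (-1) ^ a_w [1,1] n"

definition factor :: "(nat \<Rightarrow> 'a) \<Rightarrow> nat \<Rightarrow> nat \<Rightarrow> 'a list" where
  "factor s i n = map s [i..<i+n]"

definition bordered :: "'a list \<Rightarrow> bool" where
  "bordered w \<longleftrightarrow> (\<exists>x. 0 < length x \<and> 2 * length x \<le> length w
                          \<and> take (length x) w = x
                          \<and> drop (length w - length x) w = x)"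

definition unbordered :: "'a list \<Rightarrow> bool" where
  "unbordered w \<longleftrightarrow> \<not> bordered w"

end

theory Submission
  imports Defs
begin

text \<open>
  The sequence satisfies r(2n) = r(n) and r(2n+1) = (-1)^n r(n). Hence two stretches of r that
  agree with an odd shift have length at most 8: the shift forces r(m+1)/r(m) to take the same
  value at two consecutive even m, which the recurrences forbid. So a factor whose borders all
  have odd period and which has no border of length at most 8 is unbordered.

  Doubling preserves the first property: if all borders of the factor of length M at b have
  odd period, the same holds for the factor of length about 2M at about 2b, as long as its
  borders of length at most 2 do. Indeed an even period 2p with a border of length at least 3
  forces p to be even, and halving then yields a border of the original factor of even
  period p. Whether the short borders behave, and whether the doubled factor has a border of
  length at most 8, depends only on six letters at each end of the original factor. A finite
  set of such boundary states, closed under the doubling moves, is checked by computation;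
  it produces unbordered factors of every length from 10 on, and the shorter lengths are
  checked directly.
\<close>

section \<open>Recurrences for the Rudin-Shapiro sequence\<close>

lemma take_2_drop: "Suc i < length v \<Longrightarrow> take (Suc (Suc 0)) (drop i v) = [v!i, v!Suc i]"
proof -
  assume i: "Suc i < length v"
  have "drop i v = v!i # v!Suc i # drop (Suc (Suc i)) v"
    using i by (simp add: Cons_nth_drop_Suc)
  then show ?thesis by simp
qed

lemma occ_11_eq_card:
  "occ [1,1] v = card {i. Suc i < length v \<and> v!i = (1::nat) \<and> v!Suc i = 1}"
proof -
  have "{i. i + length [1,1] \<le> length v \<and> take (length [1,1]) (drop i v) = [1::nat,1]}
      = {i. Suc i < length v \<and> v!i = 1 \<and> v!Suc i = 1}"
    by (auto simp: take_2_drop)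
  then show ?thesis unfolding occ_def by simp
qed

lemma occ_11_snoc:
  "occ [1,1] (xs @ [x]) = occ [1,1] xs + (if xs \<noteq> [] \<and> last xs = 1 \<and> x = (1::nat) then 1 else 0)"
proof -
  let ?A = "{i. Suc i < length xs \<and> xs!i = (1::nat) \<and> xs!Suc i = 1}"
  let ?B = "{i. Suc i < length (xs@[x]) \<and> (xs@[x])!i = (1::nat) \<and> (xs@[x])!Suc i = 1}"
  let ?C = "if xs \<noteq> [] \<and> last xs = 1 \<and> x = (1::nat) then {length xs - 1} else {}"
  have "?B = ?A \<union> ?C"
  proof (intro set_eqI iffI)
    fix i assume "i \<in> ?B"
    then have i: "Suc i < Suc (length xs)" "(xs@[x])!i = 1" "(xs@[x])!Suc i = 1" by auto
    show "i \<in> ?A \<union> ?C"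
    proof (cases "Suc i < length xs")
      case True
      then show ?thesis using i by (auto simp: nth_append)
    next
      case False
      then have len: "Suc i = length xs" using i by auto
      then have "last xs = xs ! i"
        by (metis diff_Suc_1 last_conv_nth list.size(3) nat.distinct(1))
      then have "last xs = 1" "x = 1" using i len by (auto simp: nth_append)
      then show ?thesis using len by auto
    qed
  next
    fix i assume "i \<in> ?A \<union> ?C"
    then show "i \<in> ?B" by (auto simp: nth_append last_conv_nth split: if_splits)
  qed
  moreover have "?A \<inter> ?C = {}" by (auto split: if_splits)
  moreover have "finite ?A" by (rule finite_subset[of _ "{..<length xs}"]) auto
  ultimately show ?thesis unfolding occ_11_eq_card by (simp add: card_Un_disjoint)
qed

lemma bin_0: "bin 0 = []"
  by (simp add: bin.simps)

lemma bin_double: "0 < n \<Longrightarrow> bin (2*n) = bin n @ [0]"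
  by (subst bin.simps) simp

lemma bin_double_Suc: "bin (2*n+1) = bin n @ [1]"
  by (subst bin.simps) simp

lemma last_bin: "0 < n \<Longrightarrow> bin n \<noteq> [] \<and> last (bin n) = n mod 2"
  using bin.simps[of n] by simp

lemma rs_0: "rs 0 = 1"
  by (simp add: rs_def a_w_def bin_0 occ_def)

lemma rs_double: "rs (2*n) = rs n"
proof (cases "n = 0")
  case False
  then show ?thesis unfolding rs_def a_w_def bin_double[OF False[unfolded neq0_conv]] occ_11_snoc
    by simp
qed simp

lemma rs_double_Suc: "rs (2*n+1) = (-1)^n * rs n"
proof (cases "n = 0")
  case True
  have "bin 1 = [1]" using bin_double_Suc[of 0] by (simp add: bin_0)
  then show ?thesis unfolding True rs_def a_w_def by (simp add: bin_0 occ_def)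
next
  case False
  then have "bin n \<noteq> [] \<and> last (bin n) = n mod 2" by (simp add: last_bin)
  then show ?thesis unfolding rs_def a_w_def bin_double_Suc occ_11_snoc
    by (auto simp: minus_one_power_iff odd_iff_mod_2_eq_one)
qed

lemma rs_neq_0: "rs n \<noteq> 0"
  by (simp add: rs_def)

fun rs_rec :: "nat \<Rightarrow> int" where
  "rs_rec n = (if n = 0 then 1
    else if even n then rs_rec (n div 2) else (-1)^(n div 2) * rs_rec (n div 2))"

declare rs_rec.simps [simp del]

lemma rs_code [code]: "rs n = rs_rec n"
proof (induction n rule: rs_rec.induct)
  case (1 n)
  then show ?case
    using rs_double[of "n div 2"] rs_double_Suc[of "n div 2"]
    by (subst rs_rec.simps) (auto simp: rs_0 elim!: evenE oddE)
qed

lemma length_factor [simp]: "length (factor s a N) = N"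
  by (simp add: factor_def)

lemma nth_factor [simp]: "t < N \<Longrightarrow> factor s a N ! t = s (a+t)"
  by (simp add: factor_def)

lemma take_factor: "L \<le> N \<Longrightarrow> take L (factor s a N) = factor s a L"
  by (simp add: factor_def take_map)

lemma drop_factor: "L \<le> N \<Longrightarrow> drop (N-L) (factor s a N) = factor s (a+N-L) L"
  by (simp add: factor_def drop_map)

definition has_border :: "'a list \<Rightarrow> nat \<Rightarrow> bool" where
  "has_border w L \<longleftrightarrow> 0 < L \<and> 2*L \<le> length w \<and> take L w = drop (length w - L) w"

lemma bordered_iff_has_border: "bordered w \<longleftrightarrow> (\<exists>L. has_border w L)"
proof
  assume "bordered w"
  then show "\<exists>L. has_border w L"
    unfolding bordered_def has_border_def by (metis length_drop)
next
  assume "\<exists>L. has_border w L"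
  then obtain L where "0 < L" "2*L \<le> length w" "take L w = drop (length w - L) w"
    unfolding has_border_def by blast
  then show "bordered w" unfolding bordered_def by (intro exI[of _ "take L w"]) auto
qed

lemma bordered_code [code]:
  "bordered w \<longleftrightarrow> (\<exists>L\<in>set [1..<length w div 2 + 1]. take L w = drop (length w - L) w)"
proof -
  have "0 < L \<and> 2*L \<le> length w \<longleftrightarrow> L \<in> set [1..<length w div 2 + 1]" for L
    by auto
  then show ?thesis unfolding bordered_iff_has_border has_border_def by blast
qed

lemma has_border_factor:
  "has_border (factor s a N) L \<longleftrightarrow> 0 < L \<and> 2*L \<le> N \<and> (\<forall>t<L. s (a+t) = s (a+t+(N-L)))"
proof -
  have "take L (factor s a N) = drop (N - L) (factor s a N) \<longleftrightarrow> (\<forall>t<L. s (a+t) = s (a+t+(N-L)))"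
    if "2*L \<le> N"
    using that by (auto simp: list_eq_iff_nth_eq add_ac)
  then show ?thesis unfolding has_border_def by auto
qed

lemma has_border_short_windows:
  assumes "has_border (factor s a N) L" "L \<le> K" "K \<le> a + N"
  shows "take L (factor s a K) = drop (K-L) (factor s (a+N-K) K)"
proof -
  from assms(1) have L: "2*L \<le> N" and border: "take L (factor s a N) = drop (N-L) (factor s a N)"
    unfolding has_border_def by auto
  have "take L (factor s a K) = take L (factor s a N)"
    using L assms(2) by (simp add: take_factor)
  also have "\<dots> = drop (N-L) (factor s a N)" by (rule border)
  also have "\<dots> = drop (K-L) (factor s (a+N-K) K)"
    using L assms(2,3) by (simp add: drop_factor)
  finally show ?thesis .
qed

definition odd_border_periods :: "'a list \<Rightarrow> bool" where
  "odd_border_periods w \<longleftrightarrow> (\<forall>L. has_border w L \<longrightarrow> odd (length w - L))"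

lemma odd_border_periods_code [code]:
  "odd_border_periods w \<longleftrightarrow>
     (\<forall>L\<in>set [1..<length w div 2 + 1]. take L w = drop (length w - L) w \<longrightarrow> odd (length w - L))"
proof -
  have "0 < L \<and> 2*L \<le> length w \<longleftrightarrow> L \<in> set [1..<length w div 2 + 1]" for L
    by auto
  then show ?thesis unfolding odd_border_periods_def has_border_def by blast
qed

section \<open>Shift agreements of the Rudin-Shapiro sequence\<close>

lemma rs_odd_shift_step:
  assumes "rs (2*n) = rs (2*n + (2*h+1))" "rs (2*n+1) = rs (2*n+1 + (2*h+1))"
  shows "rs (n+h+1) = (-1)^h * rs (n+h)"
proof -
  have "rs (2*n) = rs (2*(n+h)+1)" "rs (2*n+1) = rs (2*(n+h+1))"
    using assms by (simp_all add: algebra_simps)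
  then have "rs n = (-1)^(n+h) * rs (n+h)" "(-1)^n * rs n = rs (n+h+1)"
    by (simp_all only: rs_double rs_double_Suc)
  then have "rs (n+h+1) = (-1)^n * (-1)^(n+h) * rs (n+h)" by simp
  also have "(-1)^n * (-1)^(n+h) = ((-1)^h :: int)"
    by (simp add: minus_one_power_iff)
  finally show ?thesis .
qed

lemma rs_ratio_not_constant:
  "rs (2*k+1) = c * rs (2*k) \<Longrightarrow> rs (2*(k+1)+1) \<noteq> c * rs (2*(k+1))"
  unfolding rs_double_Suc rs_double using rs_neq_0[of k] rs_neq_0[of "k+1"] by auto

lemma rs_odd_shift_agreement_le_8:
  assumes agree: "\<forall>t<L. rs (a+t) = rs (a+t+s)" and "odd s"
  shows "L \<le> 8"
proof (rule ccontr)
  assume "\<not> L \<le> 8"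
  obtain h where s: "s = 2*h+1" using \<open>odd s\<close> by (auto elim: oddE)
  define n where "n = (a+1) div 2"
  have n: "a \<le> 2*n" "2*n \<le> a+1" unfolding n_def by auto
  have shifted: "rs x = rs (x+s)" if "a \<le> x" "x < a+L" for x
    using agree[rule_format, of "x-a"] that by simp
  have step: "rs (n+i+h+1) = (-1)^h * rs (n+i+h)" if "i < 4" for i
  proof (rule rs_odd_shift_step)
    show "rs (2*(n+i)) = rs (2*(n+i) + (2*h+1))" "rs (2*(n+i)+1) = rs (2*(n+i)+1 + (2*h+1))"
      using shifted n that \<open>\<not> L \<le> 8\<close> unfolding s by simp_all
  qed
  define k where "k = (n+h+1) div 2"
  define i where "i = 2*k - (n+h)"
  have i: "i \<le> 1" "n+h+i = 2*k" unfolding i_def k_def by auto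
  have e: "n+i+h = 2*k" "n+(i+2)+h = 2*(k+1)" using i by simp_all
  have "rs (2*k+1) = (-1)^h * rs (2*k)" using step[of i] i(1) unfolding e(1) by simp
  moreover have "rs (2*(k+1)+1) = (-1)^h * rs (2*(k+1))" using step[of "i+2"] i(1) unfolding e(2) by simp
  ultimately show False using rs_ratio_not_constant by blast
qed

lemma rs_even_shift_half_even:
  assumes agree: "\<forall>t<L. rs (a+t) = rs (a+t+2*p)" and "3 \<le> L"
  shows "even p"
proof -
  define n where "n = (a+1) div 2"
  have n: "a \<le> 2*n" "2*n+1 < a+L" using assms(2) unfolding n_def by auto
  have "rs (2*n) = rs (2*(n+p))" "rs (2*n+1) = rs (2*(n+p)+1)"
    using agree[rule_format, of "2*n-a"] agree[rule_format, of "2*n+1-a"] n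
    by (simp_all add: algebra_simps)
  then have "rs n = rs (n+p)" "(-1)^n * rs n = (-1)^(n+p) * rs (n+p)"
    by (simp_all only: rs_double rs_double_Suc)
  then have "(-1)^n * rs n = (-1)^n * (-1)^p * rs n" by (simp add: power_add)
  then have "(-1)^p = (1::int)" using rs_neq_0[of n] by simp
  then show "even p" by (simp add: minus_one_power_iff split: if_splits)
qed

lemma rs_shift_halve:
  assumes "rs (2*x+q) = rs (2*(x+p)+q)" "q \<le> 1" "even p"
  shows "rs x = rs (x+p)"
proof (cases "q = 0")
  case True
  then have "rs (2*x) = rs (2*(x+p))" using assms(1) by simp
  then show ?thesis by (simp only: rs_double)
next
  case False
  then have "q = 1" using assms(2) by simp
  then have "rs (2*x+1) = rs (2*(x+p)+1)" using assms(1) by simp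
  then have "(-1)^x * rs x = (-1)^(x+p) * rs (x+p)" by (simp only: rs_double_Suc)
  then show ?thesis using \<open>even p\<close> by (simp add: power_add)
qed

text \<open>
  The positions 2x+q, for x ranging over the factor at b of length M, all lie in the factor
  at a of length N, which overhangs them by at most one letter at each end.
\<close>

lemma odd_border_periods_double:
  assumes V: "odd_border_periods (factor rs b M)" and "q \<le> 1"
    and start: "2*b+q \<le> a+1" "a \<le> 2*b+q"
    and stop: "2*(b+M)+q \<le> a+N+1" "a+N \<le> 2*(b+M)+q"
    and short: "\<forall>L\<le>2. has_border (factor rs a N) L \<longrightarrow> odd (N-L)"
  shows "odd_border_periods (factor rs a N)"
proof -
  have "odd (N - L)" if border: "has_border (factor rs a N) L" for L
  proof (rule ccontr)
    assume "\<not> odd (N - L)"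
    then obtain p where p: "N - L = 2*p" by (metis evenE)
    have "3 \<le> L"
    proof (rule ccontr)
      assume "\<not> 3 \<le> L"
      then show False using short border \<open>\<not> odd (N-L)\<close> by simp
    qed
    from border have L: "2*L \<le> N" and agree: "\<forall>t<L. rs (a+t) = rs (a+t+2*p)"
      unfolding has_border_factor p by auto
    have "even p" using rs_even_shift_half_even[OF agree \<open>3 \<le> L\<close>] .
    have "N = L + 2*p" using p L by simp
    have "p < M" using start(1) stop(2) \<open>N = L + 2*p\<close> \<open>3 \<le> L\<close> by simp
    moreover have "2*M \<le> 4*p + 1" using start(2) stop(1) L \<open>N = L + 2*p\<close> by simp
    ultimately have p_bounds: "p < M" "M \<le> 2*p" by simp_all
    have "has_border (factor rs b M) (M-p)"
      unfolding has_border_factor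
    proof (intro conjI allI impI)
      fix j assume j: "j < M - p"
      have "j + p < M" using j by simp
      then have "a \<le> 2*(b+j)+q" "2*(b+j)+q < a+L"
        using start(2) start(1) stop(1) \<open>N = L + 2*p\<close> by simp_all
      then have "rs (2*(b+j)+q) = rs (2*(b+j+p)+q)"
        using agree[rule_format, of "2*(b+j)+q-a"] by (simp add: algebra_simps)
      then have "rs (b+j) = rs (b+j+p)" using \<open>q \<le> 1\<close> \<open>even p\<close> by (rule rs_shift_halve)
      then show "rs (b+j) = rs (b+j+(M-(M-p)))" using p_bounds by simp
    qed (use p_bounds in auto)
    then have "odd p" using V p_bounds unfolding odd_border_periods_def by force
    then show False using \<open>even p\<close> by simp
  qed
  then show ?thesis unfolding odd_border_periods_def by simp
qed

lemma unbordered_if_odd_border_periods: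
  assumes "odd_border_periods (factor rs a N)" "\<forall>L\<le>8. \<not> has_border (factor rs a N) L"
  shows "unbordered (factor rs a N)"
proof -
  have False if border: "has_border (factor rs a N) L" for L
  proof -
    have "odd (N - L)" using assms(1) border unfolding odd_border_periods_def by auto
    moreover have "\<forall>t<L. rs (a+t) = rs (a+t+(N-L))" using border unfolding has_border_factor by simp
    ultimately have "L \<le> 8" by (rule rs_odd_shift_agreement_le_8[rotated])
    then show False using assms(2) border by blast
  qed
  then show ?thesis unfolding unbordered_def bordered_iff_has_border by blast
qed

section \<open>Boundary states and doubling moves\<close>

definition double_window :: "int list \<Rightarrow> int \<Rightarrow> nat \<Rightarrow> int" where
  "double_window w s q = (if even q then w!(q div 2) else s * (-1)^(q div 2) * w!(q div 2))"

lemma double_window_rs: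
  assumes "i + k \<le> 2*m"
  shows "map (\<lambda>j. double_window (factor rs c m) ((-1)^c) (i+j)) [0..<k] = factor rs (2*c+i) k"
proof (rule nth_equalityI)
  fix j assume "j < length (map (\<lambda>j. double_window (factor rs c m) ((-1)^c) (i+j)) [0..<k])"
  then have j: "j < k" "(i+j) div 2 < m" using assms by simp_all
  show "map (\<lambda>j. double_window (factor rs c m) ((-1)^c) (i+j)) [0..<k] ! j = factor rs (2*c+i) k ! j"
  proof (cases "even (i+j)")
    case True
    then have "2*c+(i+j) = 2*(c + (i+j) div 2)" by auto
    then have "rs (2*c+(i+j)) = rs (c + (i+j) div 2)" by (metis rs_double)
    then show ?thesis using True j by (simp add: double_window_def add.assoc)
  next
    case False
    then have "2*c+(i+j) = 2*(c + (i+j) div 2) + 1" by (auto elim: oddE)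
    then have "rs (2*c+(i+j)) = (-1)^(c + (i+j) div 2) * rs (c + (i+j) div 2)" by (metis rs_double_Suc)
    then show ?thesis using False j by (simp add: double_window_def power_add add.assoc)
  qed
qed simp

type_synonym state = "int list \<times> int \<times> int list \<times> int"

text \<open>
  The state of the factor of length M at b: the six letters starting one position before it,
  the six letters ending one position after it, and the signs (-1)^c of their first positions,
  which are what the recurrences need to double them.
\<close>

definition rs_state :: "nat \<Rightarrow> nat \<Rightarrow> state" where
  "rs_state b M = (let c = b - 1; e = b + M - 5 in (factor rs c 6, (-1)^c, factor rs e 6, (-1)^e))"

definition first_window :: "state \<Rightarrow> nat \<Rightarrow> int list" where
  "first_window st d = (case st of (w, s, _, _) \<Rightarrow> map (\<lambda>j. double_window w s (1+d+j)) [0..<8])"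

definition last_window :: "state \<Rightarrow> nat \<Rightarrow> int list" where
  "last_window st dE = (case st of (_, _, w, s) \<Rightarrow> map (\<lambda>j. double_window w s (1+dE+j)) [0..<8])"

definition next_state :: "state \<Rightarrow> nat \<Rightarrow> nat \<Rightarrow> state" where
  "next_state st d dE = (case st of (w, s, w', s') \<Rightarrow>
     (map (\<lambda>j. double_window w s (d+j)) [0..<6], (-1)^d,
      map (\<lambda>j. double_window w' s' (4+dE+j)) [0..<6], (-1)^dE))"

text \<open>
  The move (d, dE) passes from the factor at b of length M to the factor running from
  2b-1+d to 2(b+M)-2+dE, so a border of length L of the new factor has period of the same
  parity as d+dE+L.
\<close>

definition moves :: "(nat \<times> nat) list" where
  "moves = [(0,0), (0,1), (1,0), (1,1), (1,2), (2,1), (2,2)]"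

definition short_borders_odd :: "state \<Rightarrow> nat \<Rightarrow> nat \<Rightarrow> bool" where
  "short_borders_odd st d dE \<longleftrightarrow> (\<forall>L\<in>set [1,2].
     even (d+dE+L) \<longrightarrow> take L (first_window st d) \<noteq> drop (8-L) (last_window st dE))"

definition no_border_le_8 :: "state \<Rightarrow> nat \<Rightarrow> nat \<Rightarrow> bool" where
  "no_border_le_8 st d dE \<longleftrightarrow> (\<forall>L\<in>set [1..<9].
     take L (first_window st d) \<noteq> drop (8-L) (last_window st dE))"

lemma first_window_rs_state:
  assumes "1 \<le> b" "d \<le> 2"
  shows "first_window (rs_state b M) d = factor rs (2*b-1+d) 8"
proof -
  have "2*(b-1) + (1+d) = 2*b-1+d" using assms by simp
  then show ?thesis
    using double_window_rs[of "1+d" 8 6 "b-1"] assms by (simp add: first_window_def rs_state_def Let_def)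
qed

lemma last_window_rs_state:
  assumes "1 \<le> b" "4 \<le> M" "dE \<le> 2"
  shows "last_window (rs_state b M) dE = factor rs (2*(b+M)+dE-9) 8"
proof -
  have "2*(b+M-5) + (1+dE) = 2*(b+M)+dE-9" using assms by simp
  then show ?thesis
    using double_window_rs[of "1+dE" 8 6 "b+M-5"] assms by (simp add: last_window_def rs_state_def Let_def)
qed

lemma next_state_rs_state:
  assumes "1 \<le> b" "4 \<le> M" "d \<le> 2" "dE \<le> 2"
  shows "next_state (rs_state b M) d dE = rs_state (2*b-1+d) (2*M+dE-d)"
proof -
  have start: "2*b-1+d-1 = 2*(b-1) + d"
    and stop: "2*b-1+d + (2*M+dE-d) - 5 = 2*(b+M-5) + (4+dE)"
    using assms by simp_all
  show ?thesis
    unfolding next_state_def rs_state_def Let_def start stop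
    using double_window_rs[of d 6 6 "b-1"] double_window_rs[of "4+dE" 6 6 "b+M-5"] assms
    by (simp add: power_add power_mult)
qed

lemma has_border_move_windows:
  assumes "1 \<le> b" "4 \<le> M" "(d, dE) \<in> set moves"
    and "has_border (factor rs (2*b-1+d) (2*M+dE-d)) L" "L \<le> 8"
  shows "take L (first_window (rs_state b M) d) = drop (8-L) (last_window (rs_state b M) dE)"
proof -
  have d: "d \<le> 2" "dE \<le> 2" using assms(3) by (auto simp: moves_def)
  have "2*b-1+d + (2*M+dE-d) - 8 = 2*(b+M)+dE-9" using assms(1,2) d by simp
  then show ?thesis
    using has_border_short_windows[OF assms(4,5)] assms(1,2) d
    by (simp add: first_window_rs_state last_window_rs_state)
qed

lemma odd_border_periods_move:
  assumes "1 \<le> b" "4 \<le> M" and move: "(d, dE) \<in> set moves"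
    and V: "odd_border_periods (factor rs b M)" and short: "short_borders_odd (rs_state b M) d dE"
  shows "odd_border_periods (factor rs (2*b-1+d) (2*M+dE-d))"
proof (rule odd_border_periods_double[OF V, where q = "if d = 2 \<or> dE = 2 then 1 else 0"])
  show "\<forall>L\<le>2. has_border (factor rs (2*b-1+d) (2*M+dE-d)) L \<longrightarrow> odd (2*M+dE-d - L)"
  proof (intro allI impI)
    fix L assume "L \<le> 2" and border: "has_border (factor rs (2*b-1+d) (2*M+dE-d)) L"
    then have "L \<in> set [1,2]" "L \<le> 2*M+dE-d" by (auto simp: has_border_def)
    moreover have "take L (first_window (rs_state b M) d) = drop (8-L) (last_window (rs_state b M) dE)"
      using has_border_move_windows[OF assms(1-3) border] \<open>L \<le> 2\<close> by simp
    ultimately have "odd (d+dE+L)" using short unfolding short_borders_odd_def by blast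
    moreover have "(2*M+dE-d - L) + (d+dE+L) = 2*(M+dE)"
      using \<open>L \<le> 2*M+dE-d\<close> assms(2) move by (auto simp: moves_def)
    ultimately show "odd (2*M+dE-d - L)" by (metis dvd_triv_left even_add)
  qed
qed (use assms(1,2) move in \<open>auto simp: moves_def\<close>)

definition realized_state :: "nat \<Rightarrow> state \<Rightarrow> bool" where
  "realized_state M st \<longleftrightarrow> (\<exists>b\<ge>1. odd_border_periods (factor rs b M) \<and> st = rs_state b M)"

lemma realized_state_move:
  assumes "realized_state M st" "4 \<le> M" "(d, dE) \<in> set moves" "short_borders_odd st d dE"
  shows "realized_state (2*M+dE-d) (next_state st d dE)"
proof -
  obtain b where b: "1 \<le> b" "odd_border_periods (factor rs b M)" "st = rs_state b M"
    using assms(1) unfolding realized_state_def by blast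
  have "next_state st d dE = rs_state (2*b-1+d) (2*M+dE-d)"
    using next_state_rs_state b assms(2,3) by (auto simp: moves_def)
  moreover have "odd_border_periods (factor rs (2*b-1+d) (2*M+dE-d))"
    using odd_border_periods_move b assms by blast
  ultimately show ?thesis
    unfolding realized_state_def using b(1) by (intro exI[of _ "2*b-1+d"]) auto
qed

lemma unbordered_move:
  assumes "realized_state M st" "4 \<le> M" "(d, dE) \<in> set moves"
    and "short_borders_odd st d dE" "no_border_le_8 st d dE"
  shows "\<exists>a. unbordered (factor rs a (2*M+dE-d))"
proof -
  obtain b where b: "1 \<le> b" "odd_border_periods (factor rs b M)" "st = rs_state b M"
    using assms(1) unfolding realized_state_def by blast
  have "\<not> has_border (factor rs (2*b-1+d) (2*M+dE-d)) L" if "L \<le> 8" for L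
  proof
    assume border: "has_border (factor rs (2*b-1+d) (2*M+dE-d)) L"
    then have "L \<in> set [1..<9]" using that by (auto simp: has_border_def)
    then show False
      using has_border_move_windows[OF b(1) assms(2,3) border that] assms(5) b(3)
      unfolding no_border_le_8_def by blast
  qed
  then have "unbordered (factor rs (2*b-1+d) (2*M+dE-d))"
    using unbordered_if_odd_border_periods odd_border_periods_move b assms(2-4) by blast
  then show ?thesis by blast
qed

section \<open>The certificate\<close>

text \<open>
  From a state of length M, the first clause reaches states of lengths 2M and 2M-1, the second
  gives unbordered factors of lengths 2M and 2M+1.
\<close>

definition moves_closed :: "state list \<Rightarrow> bool" where
  "moves_closed C \<longleftrightarrow> (\<forall>st\<in>set C.
     (\<forall>e\<in>{0,1}. \<exists>(d, dE)\<in>set moves.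
        d = dE + e \<and> short_borders_odd st d dE \<and> next_state st d dE \<in> set C) \<and>
     (\<forall>e\<in>{0,1}. \<exists>(d, dE)\<in>set moves.
        dE = d + e \<and> short_borders_odd st d dE \<and> no_border_le_8 st d dE))"

text \<open>Found by computer search.\<close>

definition rs_states :: "state list" where
  "rs_states = [([-1, 1, 1, -1, 1, -1], -1, [-1, -1, 1, -1, -1, -1], 1),
    ([-1, 1, 1, -1, 1, -1], -1, [1, 1, -1, 1, -1, -1], 1),
    ([-1, 1, 1, -1, 1, 1], -1, [-1, -1, 1, -1, -1, -1], 1),
    ([-1, 1, 1, -1, 1, 1], -1, [1, 1, -1, 1, -1, -1], 1),
    ([-1, 1, 1, 1, -1, 1], -1, [-1, -1, 1, -1, -1, -1], 1),
    ([-1, 1, 1, 1, -1, 1], -1, [1, 1, -1, 1, -1, -1], 1),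
    ([1, 1, -1, -1, -1, 1], -1, [-1, -1, -1, 1, -1, -1], 1),
    ([1, 1, -1, 1, -1, -1], 1, [-1, 1, -1, -1, -1, 1], 1),
    ([1, 1, -1, 1, -1, -1], 1, [1, -1, -1, -1, -1, 1], 1),
    ([1, 1, -1, 1, 1, -1], -1, [-1, -1, -1, 1, -1, -1], 1),
    ([1, 1, -1, 1, 1, -1], -1, [-1, -1, 1, -1, -1, -1], 1),
    ([1, 1, -1, 1, 1, -1], -1, [1, 1, -1, 1, -1, -1], 1),
    ([1, 1, -1, 1, 1, 1], 1, [-1, 1, -1, -1, -1, 1], 1),
    ([1, 1, -1, 1, 1, 1], 1, [1, -1, -1, -1, -1, 1], 1),
    ([1, 1, 1, -1, -1, -1], 1, [-1, -1, -1, 1, -1, -1], 1),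
    ([1, 1, 1, -1, -1, -1], 1, [-1, 1, -1, -1, -1, 1], 1),
    ([1, 1, 1, -1, -1, -1], 1, [1, -1, -1, -1, -1, 1], 1),
    ([1, 1, 1, -1, 1, 1], 1, [-1, -1, -1, 1, -1, -1], 1),
    ([1, 1, 1, -1, 1, 1], 1, [-1, -1, 1, -1, -1, -1], 1),
    ([1, 1, 1, -1, 1, 1], 1, [-1, 1, -1, -1, -1, 1], 1),
    ([1, 1, 1, -1, 1, 1], 1, [1, -1, -1, -1, -1, 1], 1),
    ([1, 1, 1, -1, 1, 1], 1, [1, 1, -1, 1, -1, -1], 1),
    ([1, 1, 1, 1, -1, -1], -1, [-1, -1, 1, -1, -1, -1], 1),
    ([1, 1, 1, 1, -1, -1], -1, [1, 1, -1, 1, -1, -1], 1),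
    ([1, 1, 1, 1, -1, 1], -1, [-1, -1, 1, -1, -1, -1], 1),
    ([1, 1, 1, 1, -1, 1], -1, [1, 1, -1, 1, -1, -1], 1)]"

lemma moves_closed_rs_states: "moves_closed rs_states"
  by code_simp

lemma realized_state_in_rs_states_base:
  assumes "M \<in> {5, 6, 7, 8}"
  shows "\<exists>st\<in>set rs_states. realized_state M st"
proof -
  have witness: "\<exists>st\<in>set rs_states. realized_state M st"
    if "odd_border_periods (factor rs b M) \<and> rs_state b M \<in> set rs_states" "1 \<le> b" for b M
    using that unfolding realized_state_def by blast
  have "odd_border_periods (factor rs 20 5) \<and> rs_state 20 5 \<in> set rs_states"
    "odd_border_periods (factor rs 21 6) \<and> rs_state 21 6 \<in> set rs_states"
    "odd_border_periods (factor rs 18 7) \<and> rs_state 18 7 \<in> set rs_states"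
    "odd_border_periods (factor rs 17 8) \<and> rs_state 17 8 \<in> set rs_states"
    by code_simp+
  then show ?thesis using assms witness by auto
qed

lemma realized_state_in_rs_states: "5 \<le> M \<Longrightarrow> \<exists>st\<in>set rs_states. realized_state M st"
proof (induction M rule: less_induct)
  case (less M)
  show ?case
  proof (cases "M \<le> 8")
    case True
    then have "M \<in> {5, 6, 7, 8}" using less.prems by auto
    then show ?thesis by (rule realized_state_in_rs_states_base)
  next
    case False
    define K where "K = (M+1) div 2"
    have K: "5 \<le> K" "K < M" "M \<le> 2*K" "2*K - M \<in> {0,1}" using False unfolding K_def by auto
    obtain st where st: "st \<in> set rs_states" "realized_state K st"
      using less.IH[OF K(2,1)] by blast
    then obtain d dE where move: "(d, dE) \<in> set moves" "d = dE + (2*K - M)"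
      "short_borders_odd st d dE" "next_state st d dE \<in> set rs_states"
      using moves_closed_rs_states K(4) unfolding moves_closed_def by blast
    have "realized_state (2*K+dE-d) (next_state st d dE)"
      using realized_state_move st(2) K(1) move(1,3) by simp
    moreover have "2*K+dE-d = M" using move(2) K(3) by simp
    ultimately show ?thesis using move(4) by auto
  qed
qed

lemma unbordered_factor_ge_10:
  assumes "10 \<le> n"
  shows "\<exists>i. unbordered (factor rs i n)"
proof -
  define M where "M = n div 2"
  have M: "5 \<le> M" "n - 2*M \<in> {0,1}" using assms unfolding M_def by auto
  obtain st where st: "st \<in> set rs_states" "realized_state M st"
    using realized_state_in_rs_states M(1) by blast
  then obtain d dE where move: "(d, dE) \<in> set moves" "dE = d + (n - 2*M)"
    "short_borders_odd st d dE" "no_border_le_8 st d dE"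
    using moves_closed_rs_states M(2) unfolding moves_closed_def by blast
  have "\<exists>i. unbordered (factor rs i (2*M+dE-d))"
    using unbordered_move st(2) M(1) move(1,3,4) by simp
  moreover have "2*M+dE-d = n" using move(2) unfolding M_def by simp
  ultimately show ?thesis by simp
qed

lemma unbordered_factor_lt_10:
  assumes "n < 10"
  shows "\<exists>i. unbordered (factor rs i n)"
proof -
  have "unbordered (factor rs 0 0)" "unbordered (factor rs 0 1)" "unbordered (factor rs 2 2)"
    "unbordered (factor rs 1 3)" "unbordered (factor rs 0 4)" "unbordered (factor rs 6 5)"
    "unbordered (factor rs 7 6)" "unbordered (factor rs 0 7)" "unbordered (factor rs 3 8)"
    "unbordered (factor rs 4 9)"
    unfolding unbordered_def by code_simp+
  moreover have "n \<in> {0,1,2,3,4,5,6,7,8,9}" using assms by auto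
  ultimately show ?thesis by auto
qed

theorem theorem5:
  fixes n :: nat
  shows "\<exists>i. unbordered (factor rs i n)"
  using unbordered_factor_lt_10 unbordered_factor_ge_10 by (cases "n < 10") simp_all

end
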